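(* Fix $\alpha,\beta\in[0,1)$ with $\alpha+\beta<1$. For each $n$ let $k=k_n$, $l=l_n$ be integers with $\liminf_{n\to\infty} l_n/n>\beta$ and $\limsup_{n\to\infty}(k_n+l_n)/n<1-\alpha$, i.e. the code rates $R_0=l/n$, $R_1=k/n$ eventually satisfy $R_0>\beta$ and $R_0+R_1<1-\alpha$ with margins bounded away from $0$. Let $\widetilde G=[G_1\ G_0]$ be an $n\times(k+l)$ binary matrix with i.i.d. uniform entries ($G_1$ its first $k$ columns, $G_0$ its last $l$ columns), and let $\mathbf m\in\{0,1\}^k$ be arbitrary. Then, for the binary defect and erasure channel with the encoding and decoding described in the context, the probability of recovery failure $P(\widehat{\mathbf m}\neq\mathbf m)$ tends to $0$ as $n\to\infty$.
   Context: All arithmetic is over $\mathrm{GF}(2)$. Binary defect and erasure channel (BDEC) with parameters $(\beta,\alpha)$: each of the $n$ cells is independently defective with probability $\beta$; a defective cell is stuck at $0$ or $1$, each with probability $1/2$, independently. Writing codeword $\mathbf c$ stores $\mathbf c\circ\mathbf s$, where $(\mathbf c\circ\mathbf s)_i=s_i$ if cell $i$ is defective with stuck-at value $s_i$ and $=c_i$ otherwise. Then each of the $n$ stored bits is independently erased with probability $\alpha$ (independently of everything else); $\mathcal V$ is the set of unerased positions and the decoder observes $\mathcal V$ and $\mathbf y^{\mathcal V}=(\mathbf c\circ\mathbf s)^{\mathcal V}$. For a matrix/vector, superscript $\mathcal A$ denotes the rows indexed by the set $\mathcal A$. Encoding: with $\mathcal U$ the set of defects and $\mathbf b^{\mathcal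 U}=(G_1\mathbf m)^{\mathcal U}+\mathbf s^{\mathcal U}$, find $\mathbf d\in\{0,1\}^l$ with $G_0^{\mathcal U}\mathbf d=\mathbf b^{\mathcal U}$ and write $\mathbf c=G_1\mathbf m+G_0\mathbf d$; encoding failure ($E=0$) if no such $\mathbf d$ exists. Decoding: solve $\widetilde G^{\mathcal V}\binom{\widehat{\mathbf m}}{\widehat{\mathbf d}}=\mathbf y^{\mathcal V}$. The event $\{\widehat{\mathbf m}\neq\mathbf m\}$ (recovery failure) is declared if encoding fails, or if the solution set of this linear system contains vectors with different message parts $\widehat{\mathbf m}$, or does not contain $(\mathbf m,\mathbf d)$. *)

theory Defs
  imports "HOL-Probability.Probability" "HOL-Library.Z2"
begin

text \<open>Binary vectors of length k over GF(2) (type bit), as functions nat => bit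
  that vanish outside {0..<k}; binary n x N matrices likewise.\<close>

definition vecs :: "nat \<Rightarrow> (nat \<Rightarrow> bit) set" where
  "vecs k = {v. \<forall>i\<ge>k. v i = 0}"

definition mats :: "nat \<Rightarrow> nat \<Rightarrow> (nat \<Rightarrow> nat \<Rightarrow> bit) set" where
  "mats n N = {G. \<forall>i j. (n \<le> i \<or> N \<le> j) \<longrightarrow> G i j = 0}"

text \<open>G1 = first k columns of G, G0 = last l columns (columns k..k+l-1).\<close>
definition G1_mul :: "(nat \<Rightarrow> nat \<Rightarrow> bit) \<Rightarrow> nat \<Rightarrow> (nat \<Rightarrow> bit) \<Rightarrow> nat \<Rightarrow> bit" where
  "G1_mul G k m i = (\<Sum>j<k. G i j * m j)"

definition G0_mul :: "(nat \<Rightarrow> nat \<Rightarrow> bit) \<Rightarrow> nat \<Rightarrow> nat \<Rightarrow> (nat \<Rightarrow> bit) \<Rightarrow> nat \<Rightarrow> bit" where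
  "G0_mul G k l d i = (\<Sum>j<l. G i (k + j) * d j)"

text \<open>State of a cell: (defective, stuck-at value, erased).\<close>
type_synonym cell = "bool \<times> bit \<times> bool"

definition cell_pmf :: "real \<Rightarrow> real \<Rightarrow> cell pmf" where
  "cell_pmf \<beta> \<alpha> =
     do { df \<leftarrow> bernoulli_pmf \<beta>;
          s \<leftarrow> pmf_of_set (UNIV :: bit set);
          er \<leftarrow> bernoulli_pmf \<alpha>;
          return_pmf (df, s, er) }"

definition bdec_space :: "real \<Rightarrow> real \<Rightarrow> nat \<Rightarrow> nat \<Rightarrow> nat \<Rightarrow>
    ((nat \<Rightarrow> nat \<Rightarrow> bit) \<times> (nat \<Rightarrow> cell)) pmf" where
  "bdec_space \<beta> \<alpha> n k l =
     pair_pmf (pmf_of_set (mats n (k + l))) (Pi_pmf {..<n} (False, 0, False) (\<lambda>_. cell_pmf \<beta> \<alpha>))"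

definition recovery_failure ::
  "nat \<Rightarrow> nat \<Rightarrow> nat \<Rightarrow> (nat \<Rightarrow> bit) \<Rightarrow> (nat \<Rightarrow> nat \<Rightarrow> bit) \<Rightarrow> (nat \<Rightarrow> cell) \<Rightarrow> bool" where
  "recovery_failure n k l m G st =
    (let U = {i. i < n \<and> fst (st i)};
         s = (\<lambda>i. fst (snd (st i)));
         V = {i. i < n \<and> \<not> snd (snd (st i))};
         b = (\<lambda>i. G1_mul G k m i + s i);
         enc_ok = (\<exists>d\<in>vecs l. \<forall>i\<in>U. G0_mul G k l d i = b i);
         d = (SOME d. d \<in> vecs l \<and> (\<forall>i\<in>U. G0_mul G k l d i = b i));
         c = (\<lambda>i. G1_mul G k m i + G0_mul G k l d i);
         stored = (\<lambda>i. if i \<in> U then s i else c i);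
         Sol = {(m', d'). m' \<in> vecs k \<and> d' \<in> vecs l \<and>
                  (\<forall>i\<in>V. G1_mul G k m' i + G0_mul G k l d' i = stored i)}
     in \<not> enc_ok \<or> (\<exists>x\<in>Sol. \<exists>x'\<in>Sol. fst x \<noteq> fst x') \<or> (m, d) \<notin> Sol)"

definition failure_prob :: "real \<Rightarrow> real \<Rightarrow> nat \<Rightarrow> nat \<Rightarrow> nat \<Rightarrow> (nat \<Rightarrow> bit) \<Rightarrow> real" where
  "failure_prob \<beta> \<alpha> n k l m =
     measure_pmf.prob (bdec_space \<beta> \<alpha> n k l)
       {(G, st). recovery_failure n k l m G st}"

end

theory Submission
  imports Defs "HOL-Library.Function_Algebras"
begin

text \<open>
  Recovery can fail only if encoding fails, i.e.\ the map \<open>d \<mapsto> (G0 d) restricted to U\<close>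
  is not onto the vectors supported on the defect set \<open>U\<close>, or if decoding is ambiguous,
  i.e.\ the rows of \<open>[G1 G0]\<close> indexed by the unerased set \<open>V\<close> have a nonzero common
  kernel vector. A fixed nonzero vector is orthogonal to all rows in \<open>R\<close> of a uniform random
  matrix with probability \<open>2 ^ - |R|\<close>, so a union bound over kernel candidates bounds the
  decoding failure by \<open>2 ^ (k + l - |V|)\<close>. For encoding, the kernel of the map has
  \<open>2 ^ l / |image|\<close> elements: always at least \<open>2 ^ (l - |U|)\<close>, and twice that when the map
  is not onto, whereas its average size is below \<open>1 + 2 ^ (l - |U|)\<close>; averaging bounds the
  encoding failure by \<open>2 ^ (|U| - l)\<close>. By Hoeffding's inequality, \<open>|U| < (\<beta> + \<epsilon>) n\<close> and
  \<open>n - |V| < (\<alpha> + \<epsilon>) n\<close> outside an event of probability \<open>2 exp (- 2 n \<epsilon>\<^sup>2)\<close>, and there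
  the rate margins make both failure bounds at most \<open>2 ^ (- \<epsilon> n)\<close>.
\<close>

section \<open>Binary vectors and matrices\<close>

text \<open>The default simplification rules of \<open>bit\<close> turn \<open>+\<close> and \<open>*\<close> into XOR and AND,
  which defeats ring reasoning.\<close>

declare add_bit_eq_xor [simp del] mult_bit_eq_and [simp del]

lemma bit_add_self [simp]: "(a::bit) + a = 0"
  by (cases a) simp_all

lemma UNIV_bit: "(UNIV :: bit set) = {0, 1}"
  by (auto intro: bit.exhaust)

lemma finite_UNIV_bit [simp]: "finite (UNIV :: bit set)"
  by (simp add: UNIV_bit)

lemma card_UNIV_bit: "card (UNIV :: bit set) = 2"
  by (simp add: UNIV_bit)

definition vecs_on :: "'a set \<Rightarrow> ('a \<Rightarrow> bit) set" where
  "vecs_on A = {v. \<forall>x. x \<notin> A \<longrightarrow> v x = 0}"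

lemma vecs_on_eq_PiE_dflt: "vecs_on A = PiE_dflt A 0 (\<lambda>_. UNIV)"
  by (auto simp: vecs_on_def PiE_dflt_def)

lemma finite_vecs_on: "finite A \<Longrightarrow> finite (vecs_on A)"
  unfolding vecs_on_eq_PiE_dflt by (rule finite_PiE_dflt) auto

lemma card_vecs_on: "finite A \<Longrightarrow> card (vecs_on A) = 2 ^ card A"
  unfolding vecs_on_eq_PiE_dflt by (subst card_PiE_dflt) (auto simp: card_UNIV_bit)

lemma vecs_eq_vecs_on: "vecs k = vecs_on {..<k}"
  by (auto simp: vecs_def vecs_on_def)

lemma finite_vecs: "finite (vecs k)"
  by (simp add: vecs_eq_vecs_on finite_vecs_on)

lemma card_vecs: "card (vecs k) = 2 ^ k"
  by (simp add: vecs_eq_vecs_on card_vecs_on)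

lemma vecs_add_closed: "v \<in> vecs k \<Longrightarrow> w \<in> vecs k \<Longrightarrow> v + w \<in> vecs k"
  by (simp add: vecs_def)

lemma vecs_diff_closed: "v \<in> vecs k \<Longrightarrow> w \<in> vecs k \<Longrightarrow> v - w \<in> vecs k"
  by (simp add: vecs_def)

lemma mats_eq_image_curry: "mats n N = curry ` vecs_on ({..<n} \<times> {..<N})"
proof (intro equalityI subsetI)
  fix G assume "G \<in> mats n N"
  then have "case_prod G \<in> vecs_on ({..<n} \<times> {..<N})"
    by (auto simp: mats_def vecs_on_def)
  moreover have "G = curry (case_prod G)"
    by simp
  ultimately show "G \<in> curry ` vecs_on ({..<n} \<times> {..<N})"
    by blast
qed (auto simp: mats_def vecs_on_def)

lemma finite_mats: "finite (mats n N)"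
  by (simp add: mats_eq_image_curry finite_vecs_on)

lemma mats_add_closed: "G \<in> mats n N \<Longrightarrow> H \<in> mats n N \<Longrightarrow> G + H \<in> mats n N"
  by (simp add: mats_def)

lemma mats_diff_closed: "G \<in> mats n N \<Longrightarrow> H \<in> mats n N \<Longrightarrow> G - H \<in> mats n N"
  by (simp add: mats_def)

lemma zero_in_mats: "0 \<in> mats n N"
  by (simp add: mats_def)

section \<open>Counting solutions of random linear systems\<close>

lemma card_eq_card_image_mult_card_kernel:
  fixes f :: "'a::ab_group_add \<Rightarrow> 'b::ab_group_add"
  assumes A: "finite A" "\<And>x y. x \<in> A \<Longrightarrow> y \<in> A \<Longrightarrow> x + y \<in> A"
    "\<And>x y. x \<in> A \<Longrightarrow> y \<in> A \<Longrightarrow> x - y \<in> A"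
    and additive: "\<And>x y. x \<in> A \<Longrightarrow> y \<in> A \<Longrightarrow> f (x + y) = f x + f y"
  shows "card A = card (f ` A) * card {x \<in> A. f x = 0}"
proof -
  define K where "K = {x \<in> A. f x = 0}"
  have fibre: "{x \<in> A. f x = f a} = (+) a ` K" if a: "a \<in> A" for a
  proof (intro equalityI subsetI)
    fix x assume x: "x \<in> {x \<in> A. f x = f a}"
    have "f x = f (x - a) + f a"
      using additive[of "x - a" a] x a A(3) by simp
    then have "x - a \<in> K"
      using x a A(3) by (simp add: K_def)
    moreover have "x = a + (x - a)"
      by simp
    ultimately show "x \<in> (+) a ` K"
      by (rule rev_image_eqI)
  next
    fix x assume "x \<in> (+) a ` K"
    then obtain z where "z \<in> K" "x = a + z" by blast
    then show "x \<in> {x \<in> A. f x = f a}"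
      using a A(2) additive by (simp add: K_def)
  qed
  have "card A = (\<Sum>w\<in>f ` A. card {x \<in> A. f x = w})"
  proof -
    have "A = (\<Union>w\<in>f ` A. {x \<in> A. f x = w})" by auto
    then show ?thesis
      using A(1) by (subst card_UN_disjoint[symmetric]) auto
  qed
  also have "\<dots> = (\<Sum>w\<in>f ` A. card K)"
    by (rule sum.cong) (auto simp: fibre card_image)
  finally show ?thesis
    by (simp add: K_def)
qed

definition restrict_vec :: "'a set \<Rightarrow> ('a \<Rightarrow> bit) \<Rightarrow> 'a \<Rightarrow> bit" where
  "restrict_vec U v i = (if i \<in> U then v i else 0)"

lemma restrict_vec_in_vecs_on: "restrict_vec U v \<in> vecs_on U"
  by (simp add: restrict_vec_def vecs_on_def)

lemma restrict_vec_add: "restrict_vec U (v + w) = restrict_vec U v + restrict_vec U w"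
  by (simp add: restrict_vec_def fun_eq_iff)

lemma restrict_vec_eq_0_iff: "restrict_vec U v = 0 \<longleftrightarrow> (\<forall>i\<in>U. v i = 0)"
  by (auto simp: restrict_vec_def fun_eq_iff)

definition mat_mult_vec :: "(nat \<Rightarrow> nat \<Rightarrow> bit) \<Rightarrow> nat \<Rightarrow> (nat \<Rightarrow> bit) \<Rightarrow> nat \<Rightarrow> bit" where
  "mat_mult_vec G N x i = (\<Sum>j<N. G i j * x j)"

lemma mat_mult_vec_add_mat: "mat_mult_vec (G + H) N x = mat_mult_vec G N x + mat_mult_vec H N x"
  by (simp add: mat_mult_vec_def fun_eq_iff distrib_right sum.distrib)

lemma card_mats_orthogonal_rows:
  assumes x: "x \<in> vecs N" "x \<noteq> 0" and R: "R \<subseteq> {..<n}"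
  shows "card {G \<in> mats n N. \<forall>i\<in>R. mat_mult_vec G N x i = 0} * 2 ^ card R = card (mats n N)"
proof -
  define f where "f G = restrict_vec R (mat_mult_vec G N x)" for G
  obtain jj where "x jj \<noteq> 0"
    using x(2) by (auto simp: fun_eq_iff)
  then have jj: "x jj = 1" "jj < N"
    using x(1) by (auto simp: vecs_def intro: leI)
  have "f ` mats n N = vecs_on R"
  proof (intro equalityI subsetI)
    fix w assume w: "w \<in> vecs_on R"
    define G where "G i j = (if j = jj then w i else 0)" for i j
    have "G \<in> mats n N"
      using w R jj(2) by (auto simp: G_def mats_def vecs_on_def)
    moreover have "mat_mult_vec G N x i = w i" for i
    proof -
      have "mat_mult_vec G N x i = (\<Sum>j<N. if j = jj then w i else 0)"
        unfolding mat_mult_vec_def by (rule sum.cong) (simp_all add: G_def jj(1))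
      then show ?thesis
        using jj(2) by simp
    qed
    then have "f G = w"
      using w by (auto simp: f_def restrict_vec_def vecs_on_def)
    ultimately show "w \<in> f ` mats n N"
      by blast
  qed (auto simp: f_def restrict_vec_in_vecs_on)
  moreover have "card (mats n N) = card (f ` mats n N) * card {G \<in> mats n N. f G = 0}"
    by (rule card_eq_card_image_mult_card_kernel)
      (auto simp: finite_mats mats_add_closed mats_diff_closed f_def mat_mult_vec_add_mat restrict_vec_add)
  moreover have "finite R"
    using R finite_subset by blast
  ultimately show ?thesis
    by (simp add: card_vecs_on f_def restrict_vec_eq_0_iff)
qed

definition join_vec :: "nat \<Rightarrow> (nat \<Rightarrow> bit) \<Rightarrow> (nat \<Rightarrow> bit) \<Rightarrow> nat \<Rightarrow> bit" where
  "join_vec k m d j = (if j < k then m j else d (j - k))"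

lemma join_vec_in_vecs: "m \<in> vecs k \<Longrightarrow> d \<in> vecs l \<Longrightarrow> join_vec k m d \<in> vecs (k + l)"
  by (simp add: join_vec_def vecs_def)

lemma mat_mult_vec_join_vec:
  "mat_mult_vec G (k + l) (join_vec k m d) i = G1_mul G k m i + G0_mul G k l d i"
  by (induction l) (simp_all add: mat_mult_vec_def join_vec_def G1_mul_def G0_mul_def add.assoc)

lemma G0_mul_add: "G0_mul G k l (d + e) = G0_mul G k l d + G0_mul G k l e"
  by (simp add: G0_mul_def fun_eq_iff distrib_left sum.distrib)

definition G0_on :: "(nat \<Rightarrow> nat \<Rightarrow> bit) \<Rightarrow> nat \<Rightarrow> nat \<Rightarrow> nat set \<Rightarrow> (nat \<Rightarrow> bit) \<Rightarrow> nat \<Rightarrow> bit"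
  where "G0_on G k l U d = restrict_vec U (G0_mul G k l d)"

lemma G0_on_image_subset: "G0_on G k l U ` A \<subseteq> vecs_on U"
  by (auto simp: G0_on_def restrict_vec_in_vecs_on)

lemma card_G0_on_image_mult_kernel:
  "card (G0_on G k l U ` vecs l) * card {d \<in> vecs l. G0_on G k l U d = 0} = 2 ^ l"
proof -
  have "card (vecs l) = card (G0_on G k l U ` vecs l) * card {d \<in> vecs l. G0_on G k l U d = 0}"
    by (rule card_eq_card_image_mult_card_kernel)
      (simp_all add: finite_vecs vecs_add_closed vecs_diff_closed G0_on_def G0_mul_add
        restrict_vec_add)
  then show ?thesis
    by (simp add: card_vecs)
qed

lemma card_mats_G0_on_kernel:
  assumes d: "d \<in> vecs l" "d \<noteq> 0" and U: "U \<subseteq> {..<n}"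
  shows "card {G \<in> mats n (k + l). G0_on G k l U d = 0} * 2 ^ card U = card (mats n (k + l))"
proof -
  have "join_vec k 0 d \<in> vecs (k + l)"
    using d(1) by (intro join_vec_in_vecs) (simp_all add: vecs_def)
  moreover have "join_vec k 0 d \<noteq> 0"
  proof
    assume zero: "join_vec k 0 d = 0"
    have "d j = 0" for j
      using fun_cong[OF zero, of "k + j"] by (simp add: join_vec_def)
    then show False
      using d(2) by (simp add: fun_eq_iff)
  qed
  moreover have "G0_on G k l U d = 0 \<longleftrightarrow> (\<forall>i\<in>U. mat_mult_vec G (k + l) (join_vec k 0 d) i = 0)" for G
    by (simp add: G0_on_def restrict_vec_eq_0_iff mat_mult_vec_join_vec G1_mul_def)
  ultimately show ?thesis
    using card_mats_orthogonal_rows[OF _ _ U, of "join_vec k 0 d"] by simp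
qed

lemma G0_on_kernel_lower_bound:
  fixes G :: "nat \<Rightarrow> nat \<Rightarrow> bit" and k l :: nat
  assumes "finite U"
  defines "K \<equiv> card {d \<in> vecs l. G0_on G k l U d = 0}"
  shows "2 ^ l \<le> 2 ^ card U * K"
    and "G0_on G k l U ` vecs l \<noteq> vecs_on U \<Longrightarrow> 2 * 2 ^ l \<le> 2 ^ card U * K"
proof -
  define I where "I = G0_on G k l U ` vecs l"
  have IK: "card I * K = 2 ^ l"
    by (simp add: I_def K_def card_G0_on_image_mult_kernel)
  then obtain a where a: "card I = 2 ^ a"
    using divides_primepow_nat[OF two_is_prime_nat] by (metis dvd_triv_left)
  have card_I: "card I \<le> card (vecs_on U)"
    using assms by (intro card_mono) (simp_all add: finite_vecs_on I_def G0_on_image_subset)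
  then have "a \<le> card U"
    using a assms by (simp add: card_vecs_on)
  then have "(2::nat) ^ card U = 2 ^ (card U - a) * 2 ^ a"
    by (simp flip: power_add)
  then have scale: "2 ^ card U * K = 2 ^ (card U - a) * 2 ^ l"
    using IK a by (simp add: mult.assoc)
  then show "2 ^ l \<le> 2 ^ card U * K"
    by simp
  assume "G0_on G k l U ` vecs l \<noteq> vecs_on U"
  then have "I \<subset> vecs_on U"
    using G0_on_image_subset unfolding I_def by blast
  then have "card I < card (vecs_on U)"
    using assms by (intro psubset_card_mono) (simp_all add: finite_vecs_on)
  then have "a < card U"
    using a assms by (simp add: card_vecs_on)
  then have "(2::nat) ^ 1 \<le> 2 ^ (card U - a)"
    by (intro power_increasing) simp_all
  then show "2 * 2 ^ l \<le> 2 ^ card U * K"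
    using scale by simp
qed

lemma sum_card_G0_on_kernel:
  assumes U: "U \<subseteq> {..<n}"
  shows "2 ^ card U * (\<Sum>G\<in>mats n (k + l). card {d \<in> vecs l. G0_on G k l U d = 0})
    = 2 ^ card U * card (mats n (k + l)) + (2 ^ l - 1) * card (mats n (k + l))"
proof -
  define M where "M = mats n (k + l)"
  define E where "E d = {G \<in> M. G0_on G k l U d = 0}" for d
  have zero: "0 \<in> vecs l" "E 0 = M"
    by (auto simp: vecs_def E_def G0_on_def G0_mul_def restrict_vec_def fun_eq_iff)
  have "(\<Sum>G\<in>M. card {d \<in> vecs l. G0_on G k l U d = 0})
      = (\<Sum>G\<in>M. \<Sum>d\<in>vecs l. if G0_on G k l U d = 0 then 1 else 0)"
    by (simp add: sum.If_cases Int_def finite_vecs)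
  also have "\<dots> = (\<Sum>d\<in>vecs l. \<Sum>G\<in>M. if G0_on G k l U d = 0 then 1 else 0)"
    by (rule sum.swap)
  also have "\<dots> = (\<Sum>d\<in>vecs l. card (E d))"
    by (simp add: E_def sum.If_cases Int_def finite_mats M_def)
  also have "\<dots> = card M + (\<Sum>d\<in>vecs l - {0}. card (E d))"
    using zero by (simp add: sum.remove[OF finite_vecs])
  finally have "2 ^ card U * (\<Sum>G\<in>M. card {d \<in> vecs l. G0_on G k l U d = 0})
      = 2 ^ card U * card M + (\<Sum>d\<in>vecs l - {0}. card (E d) * 2 ^ card U)"
    by (simp add: algebra_simps sum_distrib_left)
  also have "(\<Sum>d\<in>vecs l - {0}. card (E d) * 2 ^ card U) = (\<Sum>d\<in>vecs l - {0}. card M)"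
    using card_mats_G0_on_kernel[OF _ _ U] by (intro sum.cong) (simp_all add: E_def M_def)
  also have "\<dots> = (2 ^ l - 1) * card M"
    using zero(1) by (simp add: card_vecs finite_vecs)
  finally show ?thesis
    unfolding M_def .
qed

lemma card_G0_on_not_surjective_le:
  assumes U: "U \<subseteq> {..<n}"
  shows "2 ^ l * card {G \<in> mats n (k + l). G0_on G k l U ` vecs l \<noteq> vecs_on U}
    \<le> 2 ^ card U * card (mats n (k + l))"
proof -
  define M where "M = mats n (k + l)"
  define B where "B = {G \<in> M. G0_on G k l U ` vecs l \<noteq> vecs_on U}"
  define K where "K G = card {d \<in> vecs l. G0_on G k l U d = 0}" for G
  have "finite U"
    using U finite_subset by blast
  then have "2 ^ l + (if G \<in> B then 2 ^ l else 0) \<le> 2 ^ card U * K G" if "G \<in> M" for G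
    using that G0_on_kernel_lower_bound[where G = G and k = k and l = l and U = U]
    by (cases "G \<in> B") (simp_all add: B_def K_def mult_2)
  then have "(\<Sum>G\<in>M. 2 ^ l + (if G \<in> B then 2 ^ l else 0)) \<le> 2 ^ card U * (\<Sum>G\<in>M. K G)"
    by (simp add: sum_distrib_left sum_mono)
  moreover have "(\<Sum>G\<in>M. 2 ^ l + (if G \<in> B then 2 ^ l else 0)) = 2 ^ l * card M + 2 ^ l * card B"
    by (simp add: sum.distrib sum.If_cases finite_mats M_def B_def Int_absorb1 Int_def)
  moreover have "(2 ^ l - 1) * card M \<le> 2 ^ l * card M"
    by simp
  moreover have "2 ^ card U * (\<Sum>G\<in>M. K G) = 2 ^ card U * card M + (2 ^ l - 1) * card M"
    unfolding K_def M_def by (rule sum_card_G0_on_kernel[OF U])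
  ultimately show ?thesis
    unfolding B_def M_def by linarith
qed

lemma card_nontrivial_kernel_le:
  assumes V: "V \<subseteq> {..<n}"
  shows "2 ^ card V * card {G \<in> mats n N. \<exists>x\<in>vecs N. x \<noteq> 0 \<and> (\<forall>i\<in>V. mat_mult_vec G N x i = 0)}
    \<le> 2 ^ N * card (mats n N)"
proof -
  define E where "E x = {G \<in> mats n N. \<forall>i\<in>V. mat_mult_vec G N x i = 0}" for x
  define X where "X = vecs N - {0}"
  have "{G \<in> mats n N. \<exists>x\<in>vecs N. x \<noteq> 0 \<and> (\<forall>i\<in>V. mat_mult_vec G N x i = 0)} = (\<Union>x\<in>X. E x)"
    by (auto simp: E_def X_def)
  then have "card {G \<in> mats n N. \<exists>x\<in>vecs N. x \<noteq> 0 \<and> (\<forall>i\<in>V. mat_mult_vec G N x i = 0)}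
      \<le> (\<Sum>x\<in>X. card (E x))"
    by (simp add: card_UN_le X_def finite_vecs)
  then have "2 ^ card V * card {G \<in> mats n N. \<exists>x\<in>vecs N. x \<noteq> 0 \<and> (\<forall>i\<in>V. mat_mult_vec G N x i = 0)}
      \<le> (\<Sum>x\<in>X. card (E x) * 2 ^ card V)"
    by (simp add: sum_distrib_right[symmetric] mult.commute[of "2 ^ card V"])
  also have "\<dots> = card X * card (mats n N)"
    using card_mats_orthogonal_rows[OF _ _ V] by (simp add: X_def E_def)
  also have "\<dots> \<le> 2 ^ N * card (mats n N)"
    using card_mono[OF finite_vecs, of X N] by (simp add: X_def card_vecs)
  finally show ?thesis .
qed

section \<open>Encoding and decoding\<close>

lemma G1_mul_add: "G1_mul G k (m + m') = G1_mul G k m + G1_mul G k m'"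
  by (simp add: G1_mul_def fun_eq_iff distrib_left sum.distrib)

lemma message_unique_if_kernel_trivial:
  assumes kernel: "\<forall>x\<in>vecs (k + l). x \<noteq> 0 \<longrightarrow> (\<exists>i\<in>V. mat_mult_vec G (k + l) x i \<noteq> 0)"
    and m: "m \<in> vecs k" "m' \<in> vecs k" and d: "d \<in> vecs l" "d' \<in> vecs l"
    and eq: "\<forall>i\<in>V. G1_mul G k m i + G0_mul G k l d i = G1_mul G k m' i + G0_mul G k l d' i"
  shows "m = m'"
proof -
  define x where "x = join_vec k (m + m') (d + d')"
  have "x \<in> vecs (k + l)"
    using m d by (simp add: x_def join_vec_in_vecs vecs_add_closed)
  moreover have "mat_mult_vec G (k + l) x i
      = (G1_mul G k m i + G0_mul G k l d i) + (G1_mul G k m' i + G0_mul G k l d' i)" for i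
    by (simp add: x_def mat_mult_vec_join_vec G1_mul_add G0_mul_add algebra_simps)
  ultimately have "x = 0"
    using kernel eq by fastforce
  have "m j + m' j = 0" if "j < k" for j
    using fun_cong[OF \<open>x = 0\<close>, of j] that by (simp add: x_def join_vec_def)
  moreover have "m j = m' j" if "\<not> j < k" for j
    using m that by (simp add: vecs_def)
  ultimately show ?thesis
    by (metis ext add_right_imp_eq bit_add_self)
qed

definition defects :: "nat \<Rightarrow> (nat \<Rightarrow> cell) \<Rightarrow> nat set" where
  "defects n st = {i. i < n \<and> fst (st i)}"

definition unerased :: "nat \<Rightarrow> (nat \<Rightarrow> cell) \<Rightarrow> nat set" where
  "unerased n st = {i. i < n \<and> \<not> snd (snd (st i))}"

lemma no_recovery_failure:
  assumes m: "m \<in> vecs k"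
    and surj: "G0_on G k l (defects n st) ` vecs l = vecs_on (defects n st)"
    and kernel: "\<forall>x\<in>vecs (k + l). x \<noteq> 0 \<longrightarrow> (\<exists>i\<in>unerased n st. mat_mult_vec G (k + l) x i \<noteq> 0)"
  shows "\<not> recovery_failure n k l m G st"
proof -
  define U where "U = defects n st"
  define b where "b = (\<lambda>i. G1_mul G k m i + fst (snd (st i)))"
  define P where "P = (\<lambda>d. d \<in> vecs l \<and> (\<forall>i\<in>U. G0_mul G k l d i = b i))"
  define d where "d = (SOME d. P d)"
  define stored where
    "stored = (\<lambda>i. if i \<in> U then fst (snd (st i)) else G1_mul G k m i + G0_mul G k l d i)"
  define Sol where "Sol = {(m', d'). m' \<in> vecs k \<and> d' \<in> vecs l \<and>
    (\<forall>i\<in>unerased n st. G1_mul G k m' i + G0_mul G k l d' i = stored i)}"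
  have failure_iff: "recovery_failure n k l m G st \<longleftrightarrow>
      \<not> (\<exists>d\<in>vecs l. \<forall>i\<in>U. G0_mul G k l d i = b i) \<or> (\<exists>x\<in>Sol. \<exists>x'\<in>Sol. fst x \<noteq> fst x') \<or> (m, d) \<notin> Sol"
    unfolding recovery_failure_def Let_def Sol_def stored_def d_def P_def b_def U_def
      defects_def unerased_def ..
  have "restrict_vec U b \<in> G0_on G k l U ` vecs l"
    using surj by (simp add: U_def restrict_vec_in_vecs_on)
  then obtain d0 where d0: "d0 \<in> vecs l" "restrict_vec U b = G0_on G k l U d0"
    by blast
  have "G0_mul G k l d0 i = b i" if "i \<in> U" for i
    using fun_cong[OF d0(2), of i] that by (simp add: G0_on_def restrict_vec_def)
  then have "P d0"
    using d0(1) by (simp add: P_def)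
  then have Pd: "P d"
    unfolding d_def by (rule someI[of P])
  have stored: "G1_mul G k m i + G0_mul G k l d i = stored i" for i
    using Pd by (simp add: stored_def P_def b_def add.assoc[symmetric])
  then have "(m, d) \<in> Sol"
    using m Pd by (simp add: Sol_def P_def)
  moreover have "fst x = m" if "x \<in> Sol" for x
  proof (cases x)
    case (Pair m' d')
    then have "m' = m"
      using that stored Pd
      by (intro message_unique_if_kernel_trivial[OF kernel _ m, of _ d' d]) (simp_all add: Sol_def P_def)
    then show ?thesis
      by (simp add: Pair)
  qed
  ultimately show ?thesis
    unfolding failure_iff using Pd by (auto simp: P_def)
qed

lemma prob_recovery_failure_given_cells:
  assumes m: "m \<in> vecs k"
  shows "measure_pmf.prob (pmf_of_set (mats n (k + l))) {G. recovery_failure n k l m G st}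
    \<le> 2 ^ card (defects n st) / 2 ^ l + 2 ^ (k + l) / 2 ^ card (unerased n st)"
proof -
  define M where "M = mats n (k + l)"
  define U where "U = defects n st"
  define V where "V = unerased n st"
  define BE where "BE = {G \<in> M. G0_on G k l U ` vecs l \<noteq> vecs_on U}"
  define BD where "BD = {G \<in> M. \<exists>x\<in>vecs (k + l). x \<noteq> 0 \<and> (\<forall>i\<in>V. mat_mult_vec G (k + l) x i = 0)}"
  have U: "U \<subseteq> {..<n}" and V: "V \<subseteq> {..<n}"
    by (auto simp: U_def V_def defects_def unerased_def)
  have "M \<inter> {G. recovery_failure n k l m G st} \<subseteq> BE \<union> BD"
  proof
    fix G assume G: "G \<in> M \<inter> {G. recovery_failure n k l m G st}"
    show "G \<in> BE \<union> BD"
    proof (rule ccontr)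
      assume "G \<notin> BE \<union> BD"
      then have "G0_on G k l U ` vecs l = vecs_on U"
        using G by (simp add: BE_def)
      moreover have "\<forall>x\<in>vecs (k + l). x \<noteq> 0 \<longrightarrow> (\<exists>i\<in>V. mat_mult_vec G (k + l) x i \<noteq> 0)"
      proof (intro ballI impI)
        fix x assume "x \<in> vecs (k + l)" "x \<noteq> 0"
        then show "\<exists>i\<in>V. mat_mult_vec G (k + l) x i \<noteq> 0"
          using G \<open>G \<notin> BE \<union> BD\<close> unfolding BD_def by blast
      qed
      ultimately have "\<not> recovery_failure n k l m G st"
        unfolding U_def V_def by (rule no_recovery_failure[OF m])
      with G show False
        by simp
    qed
  qed
  then have "card (M \<inter> {G. recovery_failure n k l m G st}) \<le> card (BE \<union> BD)"
    by (rule card_mono[rotated]) (simp add: BE_def BD_def M_def finite_mats)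
  also have "\<dots> \<le> card BE + card BD"
    by (rule card_Un_le)
  finally have card_failure: "real (card (M \<inter> {G. recovery_failure n k l m G st})) \<le> card BE + card BD"
    by linarith
  have "M \<noteq> {}"
    using zero_in_mats by (auto simp: M_def)
  then have M_pos: "real (card M) > 0"
    by (simp add: M_def finite_mats card_gt_0_iff)
  have "real (2 ^ l * card BE) \<le> real (2 ^ card U * card M)"
    using card_G0_on_not_surjective_le[OF U, of l k] unfolding BE_def M_def by (simp only: of_nat_le_iff)
  then have BE_le: "real (card BE) / card M \<le> 2 ^ card U / 2 ^ l"
    using M_pos by (simp add: field_simps)
  have "real (2 ^ card V * card BD) \<le> real (2 ^ (k + l) * card M)"
    using card_nontrivial_kernel_le[OF V, of "k + l"] unfolding BD_def M_def by (simp only: of_nat_le_iff)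
  then have BD_le: "real (card BD) / card M \<le> 2 ^ (k + l) / 2 ^ card V"
    using M_pos by (simp add: field_simps)
  from \<open>M \<noteq> {}\<close> have "measure_pmf.prob (pmf_of_set M) {G. recovery_failure n k l m G st}
      = card (M \<inter> {G. recovery_failure n k l m G st}) / card M"
    by (simp add: measure_pmf_of_set M_def finite_mats)
  also have "\<dots> \<le> real (card BE) / card M + real (card BD) / card M"
    using card_failure by (simp add: add_divide_distrib[symmetric] divide_right_mono)
  finally show ?thesis
    using BE_le BD_le by (simp add: M_def U_def V_def)
qed

section \<open>The random cell states\<close>

lemma prob_pair_pmf_le_sections:
  assumes "0 \<le> c" and sections: "\<And>b. b \<in> set_pmf B \<Longrightarrow> measure_pmf.prob A {a. (a, b) \<in> S} \<le> c"
  shows "measure_pmf.prob (pair_pmf A B) S \<le> c"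
proof -
  have pair: "pair_pmf A B = bind_pmf B (\<lambda>b. map_pmf (\<lambda>a. (a, b)) A)"
    by (subst pair_commute_pmf) (simp add: pair_pmf_def map_pmf_def bind_assoc_pmf bind_return_pmf)
  have "emeasure (pair_pmf A B) S = (\<integral>\<^sup>+b. emeasure (map_pmf (\<lambda>a. (a, b)) A) S \<partial>B)"
    by (simp add: pair)
  also have "\<dots> \<le> (\<integral>\<^sup>+b. ennreal c \<partial>B)"
  proof (rule nn_integral_mono_AE)
    have "emeasure (map_pmf (\<lambda>a. (a, b)) A) S \<le> ennreal c" if "b \<in> set_pmf B" for b
      using sections[OF that] by (simp add: measure_pmf.emeasure_eq_measure vimage_def ennreal_leI)
    then show "AE b in B. emeasure (map_pmf (\<lambda>a. (a, b)) A) S \<le> ennreal c"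
      by (simp add: AE_measure_pmf_iff)
  qed
  also have "\<dots> = ennreal c"
    by (simp add: measure_pmf.emeasure_space_1)
  finally show ?thesis
    using \<open>0 \<le> c\<close> by (simp add: measure_pmf.emeasure_eq_measure ennreal_le_iff)
qed

lemma prob_pair_pmf_le_sections_outside:
  assumes "0 \<le> c"
    and sections: "\<And>b. b \<in> set_pmf B \<Longrightarrow> b \<notin> E \<Longrightarrow> measure_pmf.prob A {a. (a, b) \<in> S} \<le> c"
  shows "measure_pmf.prob (pair_pmf A B) S \<le> c + measure_pmf.prob B E"
proof -
  have "measure_pmf.prob (pair_pmf A B) S
      \<le> measure_pmf.prob (pair_pmf A B) ({x \<in> S. snd x \<notin> E} \<union> snd -` E)"
    by (rule measure_pmf.finite_measure_mono) auto
  also have "\<dots> \<le> measure_pmf.prob (pair_pmf A B) {x \<in> S. snd x \<notin> E}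
      + measure_pmf.prob (pair_pmf A B) (snd -` E)"
    by (rule measure_Un_le) auto
  also have "measure_pmf.prob (pair_pmf A B) {x \<in> S. snd x \<notin> E} \<le> c"
    using sections \<open>0 \<le> c\<close> by (intro prob_pair_pmf_le_sections) (auto simp: Collect_conj_eq)
  also have "measure_pmf.prob (pair_pmf A B) (snd -` E) = measure_pmf.prob B E"
    by (metis measure_map_pmf map_snd_pair_pmf)
  finally show ?thesis
    by simp
qed

lemma map_pmf_card_Pi_pmf_bernoulli:
  assumes "finite A" "p \<in> {0..1}" "map_pmf f C = bernoulli_pmf p" "f dflt = False"
  shows "map_pmf (\<lambda>h. card {x \<in> A. f (h x)}) (Pi_pmf A dflt (\<lambda>_. C)) = binomial_pmf (card A) p"
proof -
  have "binomial_pmf (card A) p = map_pmf (\<lambda>g. card {x \<in> A. g x}) (Pi_pmf A False (\<lambda>_. map_pmf f C))"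
    using assms by (simp add: binomial_pmf_altdef')
  also have "Pi_pmf A False (\<lambda>_. map_pmf f C) = map_pmf (\<lambda>h. f \<circ> h) (Pi_pmf A dflt (\<lambda>_. C))"
    using assms by (intro Pi_pmf_map) simp_all
  finally show ?thesis
    by (simp add: pmf.map_comp o_def)
qed

lemma prob_Pi_pmf_count_ge:
  fixes p \<epsilon> :: real
  assumes "finite A" "A \<noteq> {}" "p \<in> {0..1}" "map_pmf f C = bernoulli_pmf p" "f dflt = False" "0 \<le> \<epsilon>"
  shows "measure_pmf.prob (Pi_pmf A dflt (\<lambda>_. C)) {h. (p + \<epsilon>) * real (card A) \<le> real (card {x \<in> A. f (h x)})}
    \<le> exp (- 2 * real (card A) * \<epsilon>\<^sup>2)"
proof -
  interpret binomial_distribution "card A" p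
    using assms(3) by unfold_locales simp_all
  have "card A > 0"
    using assms(1,2) by (simp add: card_gt_0_iff)
  then have "{h. (p + \<epsilon>) * real (card A) \<le> real (card {x \<in> A. f (h x)})}
      = (\<lambda>h. card {x \<in> A. f (h x)}) -` {x. p + \<epsilon> \<le> real x / real (card A)}"
    by (auto simp: pos_le_divide_eq)
  then show ?thesis
    using prob_ge'[OF \<open>card A > 0\<close> assms(6)]
    by (simp add: map_pmf_card_Pi_pmf_bernoulli[OF assms(1,3-5), symmetric])
qed

definition erasures :: "nat \<Rightarrow> (nat \<Rightarrow> cell) \<Rightarrow> nat set" where
  "erasures n st = {i. i < n \<and> snd (snd (st i))}"

lemma card_unerased: "card (unerased n st) = n - card (erasures n st)"
proof -
  have "unerased n st = {..<n} - erasures n st"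
    by (auto simp: unerased_def erasures_def)
  then show ?thesis
    by (simp add: card_Diff_subset erasures_def subset_eq)
qed

lemma prob_atypical_cells:
  fixes \<alpha> \<beta> \<epsilon> :: real
  assumes "n > 0" "\<alpha> \<in> {0..1}" "\<beta> \<in> {0..1}" "0 \<le> \<epsilon>"
  shows "measure_pmf.prob (Pi_pmf {..<n} (False, 0, False) (\<lambda>_. cell_pmf \<beta> \<alpha>))
      {st. (\<beta> + \<epsilon>) * n \<le> card (defects n st) \<or> (\<alpha> + \<epsilon>) * n \<le> card (erasures n st)}
    \<le> 2 * exp (- 2 * real n * \<epsilon>\<^sup>2)"
proof -
  define P where "P = Pi_pmf {..<n} (False, 0 :: bit, False) (\<lambda>_. cell_pmf \<beta> \<alpha>)"
  have counts: "defects n st = {i \<in> {..<n}. fst (st i)}"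
    "erasures n st = {i \<in> {..<n}. snd (snd (st i))}" for st
    by (auto simp: defects_def erasures_def)
  have "{..<n} \<noteq> {}"
    using assms(1) by auto
  moreover have "map_pmf fst (cell_pmf \<beta> \<alpha>) = bernoulli_pmf \<beta>"
    "map_pmf (\<lambda>c. snd (snd c)) (cell_pmf \<beta> \<alpha>) = bernoulli_pmf \<alpha>"
    by (simp_all add: cell_pmf_def map_bind_pmf bind_return_pmf')
  ultimately have "measure_pmf.prob P {st. (\<beta> + \<epsilon>) * n \<le> card (defects n st)} \<le> exp (- 2 * real n * \<epsilon>\<^sup>2)"
    "measure_pmf.prob P {st. (\<alpha> + \<epsilon>) * n \<le> card (erasures n st)} \<le> exp (- 2 * real n * \<epsilon>\<^sup>2)"
    using prob_Pi_pmf_count_ge[where A = "{..<n}" and f = fst and C = "cell_pmf \<beta> \<alpha>"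
        and dflt = "(False, 0, False)" and \<epsilon> = \<epsilon> and p = \<beta>]
      prob_Pi_pmf_count_ge[where A = "{..<n}" and f = "\<lambda>c. snd (snd c)" and C = "cell_pmf \<beta> \<alpha>"
        and dflt = "(False, 0, False)" and \<epsilon> = \<epsilon> and p = \<alpha>]
      assms
    by (simp_all add: P_def counts)
  moreover have "measure_pmf.prob P
      {st. (\<beta> + \<epsilon>) * n \<le> card (defects n st) \<or> (\<alpha> + \<epsilon>) * n \<le> card (erasures n st)}
    \<le> measure_pmf.prob P {st. (\<beta> + \<epsilon>) * n \<le> card (defects n st)}
      + measure_pmf.prob P {st. (\<alpha> + \<epsilon>) * n \<le> card (erasures n st)}"
    by (simp add: Collect_disj_eq measure_Un_le)
  ultimately show ?thesis
    by (simp add: P_def)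
qed

lemma two_power_divide_le_powr:
  assumes "real a - real b \<le> x"
  shows "(2::real) ^ a / 2 ^ b \<le> 2 powr x"
proof -
  have "(2::real) ^ a / 2 ^ b = 2 powr (real a - real b)"
    by (simp add: powr_diff powr_realpow)
  then show ?thesis
    using assms by simp
qed

lemma failure_prob_le:
  fixes \<alpha> \<beta> \<epsilon> :: real
  assumes n: "n > 0" and \<alpha>: "\<alpha> \<in> {0..1}" and \<beta>: "\<beta> \<in> {0..1}" and \<epsilon>: "\<epsilon> > 0" and m: "m \<in> vecs k"
    and defect_rate: "(\<beta> + 2 * \<epsilon>) * n \<le> l" and total_rate: "k + l \<le> (1 - \<alpha> - 2 * \<epsilon>) * n"
  shows "failure_prob \<beta> \<alpha> n k l m \<le> 2 * 2 powr (- \<epsilon> * n) + 2 * exp (- 2 * real n * \<epsilon>\<^sup>2)"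
proof -
  define atypical where "atypical =
    {st. (\<beta> + \<epsilon>) * n \<le> card (defects n st) \<or> (\<alpha> + \<epsilon>) * n \<le> card (erasures n st)}"
  have "measure_pmf.prob (pmf_of_set (mats n (k + l)))
      {G. (G, st) \<in> {(G, st). recovery_failure n k l m G st}} \<le> 2 * 2 powr (- \<epsilon> * n)"
    if "st \<notin> atypical" for st
  proof -
    have "real (card (defects n st)) - real l \<le> - \<epsilon> * n"
      using that defect_rate by (simp add: atypical_def algebra_simps)
    then have "(2::real) ^ card (defects n st) / 2 ^ l \<le> 2 powr (- \<epsilon> * n)"
      by (rule two_power_divide_le_powr)
    moreover have "card (erasures n st) \<le> n"
      using card_mono[of "{..<n}" "erasures n st"] by (auto simp: erasures_def)
    then have "real (k + l) - real (card (unerased n st)) \<le> - \<epsilon> * n"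
      using that total_rate by (simp add: atypical_def card_unerased of_nat_diff algebra_simps)
    then have "(2::real) ^ (k + l) / 2 ^ card (unerased n st) \<le> 2 powr (- \<epsilon> * n)"
      by (rule two_power_divide_le_powr)
    ultimately show ?thesis
      using prob_recovery_failure_given_cells[OF m, of n l st] by simp
  qed
  then have "failure_prob \<beta> \<alpha> n k l m \<le> 2 * 2 powr (- \<epsilon> * n)
      + measure_pmf.prob (Pi_pmf {..<n} (False, 0, False) (\<lambda>_. cell_pmf \<beta> \<alpha>)) atypical"
    unfolding failure_prob_def bdec_space_def by (intro prob_pair_pmf_le_sections_outside) simp_all
  also have "measure_pmf.prob (Pi_pmf {..<n} (False, 0, False) (\<lambda>_. cell_pmf \<beta> \<alpha>)) atypical
      \<le> 2 * exp (- 2 * real n * \<epsilon>\<^sup>2)"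
    unfolding atypical_def using prob_atypical_cells[OF n \<alpha> \<beta>] \<epsilon> by simp
  finally show ?thesis
    by simp
qed

section \<open>Asymptotics\<close>

lemma tendsto_failure_bound:
  fixes \<epsilon> :: real
  assumes "\<epsilon> > 0"
  shows "(\<lambda>n. 2 * 2 powr (- \<epsilon> * n) + 2 * exp (- 2 * real n * \<epsilon>\<^sup>2)) \<longlonglongrightarrow> 0"
proof -
  have geometric: "2 powr (- \<epsilon> * n) = (2 powr (- \<epsilon>)) ^ n"
    "exp (- 2 * real n * \<epsilon>\<^sup>2) = exp (- 2 * \<epsilon>\<^sup>2) ^ n" for n :: nat
    by (simp_all add: powr_realpow[symmetric] powr_powr exp_of_nat_mult[symmetric] algebra_simps)
  have "(\<lambda>n. (2 powr (- \<epsilon>)) ^ n) \<longlonglongrightarrow> 0"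
    by (rule LIMSEQ_power_zero) (use assms in \<open>auto simp: powr_minus divide_simps\<close>)
  moreover have "(\<lambda>n. exp (- 2 * \<epsilon>\<^sup>2) ^ n) \<longlonglongrightarrow> 0"
    by (rule LIMSEQ_power_zero) (use assms in auto)
  ultimately have "(\<lambda>n. 2 * (2 powr (- \<epsilon>)) ^ n + 2 * exp (- 2 * \<epsilon>\<^sup>2) ^ n) \<longlonglongrightarrow> 2 * 0 + 2 * 0"
    by (intro tendsto_add tendsto_mult tendsto_const)
  then show ?thesis
    unfolding geometric by simp
qed

lemma liminf_gt_imp_eventually_ge:
  assumes "ereal c < liminf (\<lambda>n. ereal (f n))"
  obtains \<delta> where "\<delta> > 0" "eventually (\<lambda>n. c + \<delta> \<le> f n) sequentially"
proof -
  obtain r where r: "c < r" "ereal r < liminf (\<lambda>n. ereal (f n))"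
    using ereal_dense2[OF assms] by auto
  have "eventually (\<lambda>n. ereal r < ereal (f n)) sequentially"
    using less_LiminfD[OF r(2)] .
  then have "eventually (\<lambda>n. c + (r - c) \<le> f n) sequentially"
    by eventually_elim simp
  then show ?thesis
    using r(1) by (intro that[of "r - c"]) simp_all
qed

lemma limsup_lt_imp_eventually_le:
  assumes "limsup (\<lambda>n. ereal (f n)) < ereal c"
  obtains \<delta> where "\<delta> > 0" "eventually (\<lambda>n. f n \<le> c - \<delta>) sequentially"
proof -
  obtain r where r: "limsup (\<lambda>n. ereal (f n)) < ereal r" "r < c"
    using ereal_dense2[OF assms] by auto
  have "eventually (\<lambda>n. ereal (f n) < ereal r) sequentially"
    using Limsup_lessD[OF r(1)] .
  then have "eventually (\<lambda>n. f n \<le> c - (c - r)) sequentially"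
    by eventually_elim simp
  then show ?thesis
    using r(2) by (intro that[of "c - r"]) simp_all
qed

lemma eventually_rate_margins:
  fixes \<alpha> \<beta> :: real and k l :: "nat \<Rightarrow> nat"
  assumes "liminf (\<lambda>n. ereal (real (l n) / real n)) > ereal \<beta>"
    and "limsup (\<lambda>n. ereal (real (k n + l n) / real n)) < ereal (1 - \<alpha>)"
  obtains \<epsilon> where "\<epsilon> > 0" and "eventually (\<lambda>n. n > 0 \<and> (\<beta> + 2 * \<epsilon>) * n \<le> l n
      \<and> k n + l n \<le> (1 - \<alpha> - 2 * \<epsilon>) * n) sequentially"
proof -
  obtain \<delta>0 where \<delta>0: "\<delta>0 > 0" "eventually (\<lambda>n. \<beta> + \<delta>0 \<le> real (l n) / n) sequentially"
    using liminf_gt_imp_eventually_ge[OF assms(1)] by blast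
  obtain \<delta>1 where \<delta>1: "\<delta>1 > 0" "eventually (\<lambda>n. real (k n + l n) / n \<le> 1 - \<alpha> - \<delta>1) sequentially"
    using limsup_lt_imp_eventually_le[OF assms(2)] by blast
  define \<epsilon> where "\<epsilon> = min \<delta>0 \<delta>1 / 2"
  have "eventually (\<lambda>n. n > 0 \<and> (\<beta> + 2 * \<epsilon>) * n \<le> l n \<and> k n + l n \<le> (1 - \<alpha> - 2 * \<epsilon>) * n)
      sequentially"
    using \<delta>0(2) \<delta>1(2) eventually_gt_at_top[of 0]
  proof eventually_elim
    case (elim n)
    have "(\<beta> + 2 * \<epsilon>) * n \<le> (\<beta> + \<delta>0) * n" "(1 - \<alpha> - \<delta>1) * n \<le> (1 - \<alpha> - 2 * \<epsilon>) * n"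
      by (simp_all add: \<epsilon>_def mult_right_mono)
    moreover have "(\<beta> + \<delta>0) * n \<le> l n" "k n + l n \<le> (1 - \<alpha> - \<delta>1) * n"
      using elim by (simp_all add: pos_le_divide_eq pos_divide_le_eq)
    ultimately show ?case
      using elim(3) by linarith
  qed
  moreover have "\<epsilon> > 0"
    using \<delta>0(1) \<delta>1(1) by (simp add: \<epsilon>_def)
  ultimately show ?thesis
    using that by blast
qed

theorem theorem3:
  fixes \<alpha> \<beta> :: real and k l :: "nat \<Rightarrow> nat" and m :: "nat \<Rightarrow> nat \<Rightarrow> bit"
  assumes "0 \<le> \<alpha>" "\<alpha> < 1" "0 \<le> \<beta>" "\<beta> < 1" "\<alpha> + \<beta> < 1"
    and "liminf (\<lambda>n. ereal (real (l n) / real n)) > ereal \<beta>"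
    and "limsup (\<lambda>n. ereal (real (k n + l n) / real n)) < ereal (1 - \<alpha>)"
    and "\<And>n. m n \<in> vecs (k n)"
  shows "(\<lambda>n. failure_prob \<beta> \<alpha> n (k n) (l n) (m n)) \<longlonglongrightarrow> 0"
proof -
  obtain \<epsilon> where \<epsilon>: "\<epsilon> > 0" and rates: "eventually (\<lambda>n. n > 0 \<and> (\<beta> + 2 * \<epsilon>) * n \<le> l n
      \<and> k n + l n \<le> (1 - \<alpha> - 2 * \<epsilon>) * n) sequentially"
    using eventually_rate_margins[OF assms(6,7)] .
  from rates have "eventually (\<lambda>n. failure_prob \<beta> \<alpha> n (k n) (l n) (m n)
      \<le> 2 * 2 powr (- \<epsilon> * n) + 2 * exp (- 2 * real n * \<epsilon>\<^sup>2)) sequentially"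
  proof eventually_elim
    case (elim n)
    then show ?case
      using assms \<epsilon> by (intro failure_prob_le) simp_all
  qed
  then show ?thesis
    by (rule tendsto_sandwich[OF _ _ tendsto_const tendsto_failure_bound[OF \<epsilon>], rotated])
      (simp add: failure_prob_def)
qed

end
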